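(* Let $(N^\circ,M^\circ,L^\circ)\in OLag(V)^3$ be a triple of oriented Lagrangians which are pairwise in general position (i.e. $N+M=M+L=N+L=V$). Then $$T_{N^\circ,L^\circ}=T_{N^\circ,M^\circ}\circ T_{M^\circ,L^\circ}$$ as maps $\mathcal H_{L^\circ}\to\mathcal H_{N^\circ}$.
   Context: Let $p$ be an odd prime, $q$ a power of $p$, and $(V,\omega)$ a symplectic vector space of dimension $2n$ over $\mathbb F_q$. The Heisenberg group $H(V)$ is the set $V\times\mathbb F_q$ with multiplication $(v,z)\cdot(v',z')=(v+v',z+z'+\tfrac12\omega(v,v'))$; its center is $Z=\{(0,z):z\in\mathbb F_q\}$. Fix a non-trivial character $\psi:\mathbb F_q\to\mathbb C^\times$. An isotropic subspace $I\subset V$ is regarded as the subgroup $\{(i,0):i\in I\}$ of $H(V)$. An oriented Lagrangian is a pair $L^\circ=(L,o_L)$ with $L\subset V$ a Lagrangian subspace and $o_L\in\bigwedge^nL$ nonzero; $OLag(V)$ denotes the set of oriented Lagrangians. For $L^\circ\in OLag(V)$, $\mathcal H_{L^\circ}$ is the space of functions $f:H(V)\to\mathbb C$ with $f((0,z)\cdot(l,0)\cdot h)=\psi(z)f(h)$ for all $z\in\mathbb F_q$, $l\in L$, $h\in H(V)$, on which $H(V)$ acts by right translation $(\pi_{L^\circ}(h)f)(h')=f(h'h)$. For a $2k$-dimensional symplectic space $(W,\omega)$ and Lagrangians $A,B\subset W$, define $\omega_\wedge:\bigwedge^kA\times\bigwedge^kB\to\mathbb F_q$ by $\omega_\wedge(a_1\wedge\dots\wedge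 a_k,\,b_1\wedge\dots\wedge b_k)=(-1)^{k(k-1)/2}\det\big(\omega(a_i,b_j)\big)_{i,j}$. Let $\sigma$ be the Legendre character of $\mathbb F_q^\times$ (the unique character of order $2$) and $G_1=\sum_{z\in\mathbb F_q}\psi(\tfrac12z^2)$. Lagrangians $M,L$ are in general position if $M+L=V$. For $(M^\circ,L^\circ)$ in general position define $F_{M^\circ,L^\circ}:\mathcal H_{L^\circ}\to\mathcal H_{M^\circ}$ by $F_{M^\circ,L^\circ}[f](h)=\sum_{m\in M}f((m,0)\cdot h)$, the constant $A_{M^\circ,L^\circ}=(G_1/q)^n\,\sigma\big((-1)^{n(n-1)/2}\omega_\wedge(o_L,o_M)\big)$, and $T_{M^\circ,L^\circ}=A_{M^\circ,L^\circ}\cdot F_{M^\circ,L^\circ}$. *)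

theory Defs
  imports Complex_Main "HOL-Combinatorics.Permutations"
begin

text \<open>Finite field 'k (odd characteristic), symplectic space V = the type 'v,
  a vector space over 'k with scalar multiplication scale.\<close>

definition symplectic_form ::
  "('k::field \<Rightarrow> 'v::ab_group_add \<Rightarrow> 'v) \<Rightarrow> ('v \<Rightarrow> 'v \<Rightarrow> 'k) \<Rightarrow> bool" where
  "symplectic_form scale \<omega> \<longleftrightarrow>
     (\<forall>x y z. \<omega> (x + y) z = \<omega> x z + \<omega> y z) \<and>
     (\<forall>x y z. \<omega> x (y + z) = \<omega> x y + \<omega> x z) \<and>
     (\<forall>c x y. \<omega> (scale c x) y = c * \<omega> x y) \<and>
     (\<forall>c x y. \<omega> x (scale c y) = c * \<omega> x y) \<and>
     (\<forall>x. \<omega> x x = 0) \<and>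
     (\<forall>x. (\<forall>y. \<omega> x y = 0) \<longrightarrow> x = 0)"

definition heis_mult :: "('v::ab_group_add \<Rightarrow> 'v \<Rightarrow> 'k::field) \<Rightarrow> 'v \<times> 'k \<Rightarrow> 'v \<times> 'k \<Rightarrow> 'v \<times> 'k" where
  "heis_mult \<omega> a b = (fst a + fst b, snd a + snd b + \<omega> (fst a) (fst b) / 2)"

definition lagrangian ::
  "('k::field \<Rightarrow> 'v::ab_group_add \<Rightarrow> 'v) \<Rightarrow> ('v \<Rightarrow> 'v \<Rightarrow> 'k) \<Rightarrow> 'v set \<Rightarrow> bool" where
  "lagrangian scale \<omega> L \<longleftrightarrow> module.subspace scale L \<and> (\<forall>x\<in>L. \<forall>y\<in>L. \<omega> x y = 0) \<and>
     2 * vector_space.dim scale L = vector_space.dim scale (UNIV :: 'v set)"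

text \<open>An oriented Lagrangian (L, o_L): the orientation o_L = b_1 \<wedge> ... \<wedge> b_n
  (a nonzero element of the top exterior power of L) is represented by an ordered
  basis bs = [b_1,...,b_n] of L; every nonzero element of the (one-dimensional)
  top exterior power is of this form.\<close>
definition oriented_lagrangian ::
  "('k::field \<Rightarrow> 'v::ab_group_add \<Rightarrow> 'v) \<Rightarrow> ('v \<Rightarrow> 'v \<Rightarrow> 'k) \<Rightarrow> 'v set \<Rightarrow> 'v list \<Rightarrow> bool" where
  "oriented_lagrangian scale \<omega> L bs \<longleftrightarrow> lagrangian scale \<omega> L \<and> distinct bs \<and>
     module.independent scale (set bs) \<and> module.span scale (set bs) = L"

definition general_position :: "'v::ab_group_add set \<Rightarrow> 'v set \<Rightarrow> bool" where
  "general_position M L \<longleftrightarrow> (\<forall>v. \<exists>m\<in>M. \<exists>l\<in>L. v = m + l)"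

definition det_fun :: "(nat \<Rightarrow> nat \<Rightarrow> 'a::comm_ring_1) \<Rightarrow> nat \<Rightarrow> 'a" where
  "det_fun A k = (\<Sum>p | p permutes {..<k}. of_int (sign p) * (\<Prod>i<k. A i (p i)))"

definition omega_wedge :: "('v \<Rightarrow> 'v \<Rightarrow> 'k::field) \<Rightarrow> 'v list \<Rightarrow> 'v list \<Rightarrow> 'k" where
  "omega_wedge \<omega> as bs = (-1) ^ (length as * (length as - 1) div 2) *
     det_fun (\<lambda>i j. \<omega> (as ! i) (bs ! j)) (length as)"

definition legendre_char :: "'k::field \<Rightarrow> complex" where
  "legendre_char x = (if x = 0 then 0 else if (\<exists>y. y ^ 2 = x) then 1 else -1)"

definition gauss_G1 :: "('k::{field,finite} \<Rightarrow> complex) \<Rightarrow> complex" where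
  "gauss_G1 \<psi> = (\<Sum>z\<in>UNIV. \<psi> (z ^ 2 / 2))"

definition heis_space ::
  "('v::ab_group_add \<Rightarrow> 'v \<Rightarrow> 'k::field) \<Rightarrow> ('k \<Rightarrow> complex) \<Rightarrow> 'v set \<Rightarrow> ('v \<times> 'k \<Rightarrow> complex) set" where
  "heis_space \<omega> \<psi> L = {f. \<forall>z. \<forall>l\<in>L. \<forall>h.
     f (heis_mult \<omega> (heis_mult \<omega> (0, z) (l, 0)) h) = \<psi> z * f h}"

definition F_op :: "('v::ab_group_add \<Rightarrow> 'v \<Rightarrow> 'k::field) \<Rightarrow> 'v set \<Rightarrow>
    ('v \<times> 'k \<Rightarrow> complex) \<Rightarrow> ('v \<times> 'k \<Rightarrow> complex)" where
  "F_op \<omega> M f = (\<lambda>h. \<Sum>m\<in>M. f (heis_mult \<omega> (m, 0) h))"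

text \<open>A_{M,L} for oriented Lagrangians (M, oM), (L, oL); n = dim V / 2.\<close>
definition A_const :: "('v \<Rightarrow> 'v \<Rightarrow> 'k::{field,finite}) \<Rightarrow> ('k \<Rightarrow> complex) \<Rightarrow> nat \<Rightarrow>
    'v list \<Rightarrow> 'v list \<Rightarrow> complex" where
  "A_const \<omega> \<psi> n oM oL = (gauss_G1 \<psi> / of_nat (card (UNIV :: 'k set))) ^ n *
     legendre_char ((-1) ^ (n * (n - 1) div 2) * omega_wedge \<omega> oL oM)"

definition T_op :: "('v::ab_group_add \<Rightarrow> 'v \<Rightarrow> 'k::{field,finite}) \<Rightarrow> ('k \<Rightarrow> complex) \<Rightarrow> nat \<Rightarrow>
    'v set \<Rightarrow> 'v list \<Rightarrow> 'v set \<Rightarrow> 'v list \<Rightarrow> ('v \<times> 'k \<Rightarrow> complex) \<Rightarrow> ('v \<times> 'k \<Rightarrow> complex)" where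
  "T_op \<omega> \<psi> n M oM L oL f = (\<lambda>h. A_const \<omega> \<psi> n oM oL * F_op \<omega> M f h)"

end

theory Submission
  imports Defs "Jordan_Normal_Form.Determinant"
begin

(* For m in M write m = a + b with a in N and b in L (possible since N + L = V).
   Translating the summation variable of F_N by a and using the L-equivariance of f gives
     F_N (F_M f) = (\<Sum>_{m\<in>M} \<psi>(\<omega>(a,b)/2)) \<cdot> F_N f,
   and m \<mapsto> \<omega>(a,b) is a quadratic form on M.  In a basis of M its Gram matrix C satisfies
     det C \<cdot> det \<omega>(o_L,o_N) = (-1)^n det \<omega>(o_M,o_N) \<cdot> det \<omega>(o_L,o_M),
   all three pairing determinants being nonzero by general position.  The quadratic Gauss sum
   evaluates to G_1^n \<sigma>(det C), and with G_1^2 = \<sigma>(-1) q the constants combine to A_{N,L}. *)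

section \<open>Additive characters and the Legendre character\<close>

locale additive_character =
  fixes \<psi> :: "'k::{field,finite} \<Rightarrow> complex"
  assumes two: "(2::'k) \<noteq> 0"
    and hom: "\<And>a b. \<psi> (a + b) = \<psi> a * \<psi> b"
    and nz: "\<And>a. \<psi> a \<noteq> 0"
    and nontriv: "\<exists>a. \<psi> a \<noteq> 1"
begin

lemma psi_zero: "\<psi> 0 = 1"
proof -
  have "\<psi> 0 = \<psi> 0 * \<psi> 0" using hom[of 0 0] by simp
  thus ?thesis using nz[of 0] by simp
qed

lemma sum_translate: "(\<Sum>t\<in>UNIV. g (t + (s::'k))) = (\<Sum>t\<in>UNIV. (g t :: complex))"
  by (rule sum.reindex_bij_witness[where i="\<lambda>t. t - s" and j="\<lambda>t. t + s"]) auto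

lemma sum_dilate: "(a::'k) \<noteq> 0 \<Longrightarrow> (\<Sum>t\<in>UNIV. g (a * t)) = (\<Sum>t\<in>UNIV. (g t :: complex))"
  by (rule sum.reindex_bij_witness[where i="\<lambda>t. t / a" and j="\<lambda>t. a * t"]) auto

lemma character_sum_zero: "(\<Sum>t\<in>UNIV. \<psi> t) = 0"
proof -
  obtain b where b: "\<psi> b \<noteq> 1" using nontriv by auto
  have "(\<Sum>t\<in>UNIV. \<psi> t) = (\<Sum>t\<in>UNIV. \<psi> (t + b))" by (rule sum_translate[symmetric])
  also have "\<dots> = \<psi> b * (\<Sum>t\<in>UNIV. \<psi> t)" by (simp add: hom sum_distrib_left mult.commute)
  finally have "(1 - \<psi> b) * (\<Sum>t\<in>UNIV. \<psi> t) = 0" by (simp add: algebra_simps)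
  thus ?thesis using b by simp
qed

lemma character_sum_linear:
  "(\<Sum>t\<in>UNIV. \<psi> (t * x)) = (if x = 0 then of_nat (card (UNIV::'k set)) else 0)"
  using sum_dilate[of x \<psi>] character_sum_zero psi_zero by (auto simp: mult.commute)

definition is_square :: "'k \<Rightarrow> bool" where "is_square x \<longleftrightarrow> (\<exists>y. y ^ 2 = x)"

lemma legendre_char_eq: "legendre_char x = (if x = 0 then 0 else if is_square x then 1 else -1)"
  unfolding legendre_char_def is_square_def by simp

lemma legendre_one: "legendre_char (1::'k) = 1"
  by (auto simp: legendre_char_eq is_square_def intro: exI[of _ 1])

lemma card_square_roots: "card {x::'k. x ^ 2 = t} = (if t = 0 then 1 else if is_square t then 2 else 0)"
proof (cases "t = 0")
  case True
  then have "{x::'k. x ^ 2 = t} = {0}" by auto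
  then show ?thesis using True by simp
next
  case t0: False
  show ?thesis
  proof (cases "is_square t")
    case True
    then obtain s where s: "s ^ 2 = t" unfolding is_square_def by auto
    then have s0: "s \<noteq> 0" using t0 by auto
    have "x ^ 2 = t \<longleftrightarrow> x = s \<or> x = -s" for x
    proof
      assume "x ^ 2 = t"
      then have "(x - s) * (x + s) = 0" using s by (simp add: algebra_simps power2_eq_square)
      then show "x = s \<or> x = -s" by (auto simp: add_eq_0_iff)
    qed (use s in auto)
    then have "{x::'k. x ^ 2 = t} = {s, -s}" by auto
    moreover have "s \<noteq> - s"
    proof
      assume "s = - s" then have "2 * s = 0" by simp
      then show False using two s0 by simp
    qed
    ultimately show ?thesis using True t0 by simp
  next
    case False
    then have "{x::'k. x ^ 2 = t} = {}" unfolding is_square_def by auto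
    then show ?thesis using t0 False by simp
  qed
qed

text \<open>Counting square roots turns a sum over x^2 into a \<sigma>-weighted sum.\<close>
lemma card_square_roots_legendre: "of_nat (card {x::'k. x ^ 2 = t}) = 1 + legendre_char t"
  unfolding card_square_roots legendre_char_eq by simp

lemma sum_over_squares:
  "(\<Sum>x\<in>UNIV. h ((x::'k) ^ 2)) = (\<Sum>t\<in>UNIV. (1 + legendre_char t) * (h t :: complex))"
proof -
  have "(\<Sum>x\<in>UNIV. h (x ^ 2)) = (\<Sum>x\<in>UNIV. \<Sum>t\<in>UNIV. if x ^ 2 = t then h t else 0)"
    by (intro sum.cong refl) (subst sum.delta', auto)
  also have "\<dots> = (\<Sum>t\<in>UNIV. \<Sum>x\<in>UNIV. if x ^ 2 = t then h t else 0)" by (rule sum.swap)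
  also have "\<dots> = (\<Sum>t\<in>UNIV. of_nat (card {x::'k. x ^ 2 = t}) * h t)"
    by (simp add: sum.If_cases)
  finally show ?thesis by (simp add: card_square_roots_legendre)
qed

lemma legendre_sum_zero: "(\<Sum>t\<in>UNIV. legendre_char (t::'k)) = 0"
  using sum_over_squares[of "\<lambda>_. 1"] by (simp add: sum.distrib)

text \<open>Since there are as many nonzero squares as nonsquares, multiplication by a nonsquare
  maps nonzero squares onto nonsquares; hence a product of two nonsquares is a square.\<close>
lemma nonsquare_mult: assumes a: "\<not> is_square a" and b: "\<not> is_square b" shows "is_square (a * b)"
proof -
  let ?S = "{t::'k. t \<noteq> 0 \<and> is_square t}" and ?NS = "{t::'k. \<not> is_square t}"
  have pw: "legendre_char t = (if t \<in> ?S then 1 else 0) - (if t \<in> ?NS then 1 else 0)" for t :: 'k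
    by (auto simp: legendre_char_eq is_square_def intro: exI[of _ 0])
  have "(\<Sum>t\<in>UNIV. legendre_char (t::'k)) = of_nat (card ?S) - of_nat (card ?NS)"
    unfolding pw sum_subtractf by (simp add: sum.If_cases)
  then have "card ?S = card ?NS" using legendre_sum_zero of_nat_eq_iff by fastforce
  have a0: "a \<noteq> 0" using a by (auto simp: is_square_def intro: exI[of _ 0])
  have sub: "(\<lambda>t. a * t) ` ?S \<subseteq> ?NS"
  proof safe
    fix t assume t0: "t \<noteq> 0" and "is_square t" and "is_square (a * t)"
    then obtain u v where u: "u ^ 2 = t" and v: "v ^ 2 = a * t" by (auto simp: is_square_def)
    have "u \<noteq> 0" using u t0 by auto
    then have "(v / u) ^ 2 = a" using u v t0 by (simp add: power_divide)
    then show False using a by (auto simp: is_square_def)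
  qed
  have "inj_on (\<lambda>t. a * t) ?S" using a0 by (auto simp: inj_on_def)
  then have "card ((\<lambda>t. a * t) ` ?S) = card ?NS" using \<open>card ?S = card ?NS\<close> by (simp add: card_image)
  then have "(\<lambda>t. a * t) ` ?S = ?NS" using sub by (intro card_subset_eq) auto
  then have "b \<in> (\<lambda>t. a * t) ` ?S" using b by simp
  then obtain t where t: "t \<noteq> 0" "is_square t" "b = a * t" by blast
  then obtain u where "u ^ 2 = t" by (auto simp: is_square_def)
  then have "(a * u) ^ 2 = a * b" using t by (simp add: power2_eq_square algebra_simps)
  then show ?thesis by (auto simp: is_square_def)
qed

lemma legendre_mult: "legendre_char (x * y) = legendre_char x * legendre_char (y::'k)"
proof (cases "x = 0 \<or> y = 0")
  case True then show ?thesis by (auto simp: legendre_char_eq)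
next
  case False
  then have x0: "x \<noteq> 0" and y0: "y \<noteq> 0" by auto
  have sq_sq: "is_square (u * v)" if su: "is_square u" and sv: "is_square v" for u v
  proof -
    obtain a b where "a ^ 2 = u" "b ^ 2 = v" using su sv unfolding is_square_def by blast
    then have "(a * b) ^ 2 = u * v" by (simp add: power_mult_distrib)
    then show ?thesis by (auto simp: is_square_def)
  qed
  have sq_nonsq: "\<not> is_square (u * v)" if su: "is_square u" and nv: "\<not> is_square v" and u0: "u \<noteq> 0" for u v
  proof
    assume "is_square (u * v)"
    then obtain t where t: "t ^ 2 = u * v" unfolding is_square_def by blast
    obtain s where s: "s ^ 2 = u" using su unfolding is_square_def by blast
    have "s \<noteq> 0" using s u0 by auto
    then have "(t / s) ^ 2 = v" using s t u0 by (simp add: power_divide)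
    then show False using nv unfolding is_square_def by blast
  qed
  have xy0: "x * y \<noteq> 0" using x0 y0 by simp
  show ?thesis
  proof (cases "is_square x"; cases "is_square y")
    assume "is_square x" "is_square y"
    then show ?thesis using sq_sq[of x y] x0 y0 xy0 by (simp add: legendre_char_eq)
  next
    assume "is_square x" "\<not> is_square y"
    then show ?thesis using sq_nonsq[of x y] x0 y0 xy0 by (simp add: legendre_char_eq)
  next
    assume "\<not> is_square x" "is_square y"
    then show ?thesis using sq_nonsq[of y x] x0 y0 xy0 by (simp add: legendre_char_eq mult.commute)
  next
    assume "\<not> is_square x" "\<not> is_square y"
    then show ?thesis using nonsquare_mult[of x y] x0 y0 xy0 by (simp add: legendre_char_eq)
  qed
qed

lemma legendre_self_mult: "x \<noteq> 0 \<Longrightarrow> legendre_char x * legendre_char (x::'k) = 1"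
  by (auto simp: legendre_char_eq)

lemma legendre_inverse: "legendre_char (1 / x) = legendre_char (x::'k)"
proof (cases "x = 0")
  case False
  have "legendre_char (1 / x) * (legendre_char x * legendre_char x) = legendre_char x"
    using legendre_mult[of "1 / x" x] legendre_mult[of "1/x * x" x] False by (simp add: legendre_one)
  then show ?thesis using legendre_self_mult[OF False] by simp
qed simp

lemma legendre_power: "legendre_char ((-1::'k) ^ m) = legendre_char (-1::'k) ^ m"
proof (induction m)
  case (Suc m)
  show ?case by (simp only: power_Suc legendre_mult Suc.IH)
qed (simp add: legendre_one)

lemma gauss_sum_scaled:
  assumes a: "a \<noteq> 0" shows "(\<Sum>x\<in>UNIV. \<psi> (a * x ^ 2 / 2)) = legendre_char a * gauss_G1 \<psi>"
proof -
  have key: "(\<Sum>x\<in>UNIV. \<psi> (b * x ^ 2 / 2)) =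
      legendre_char b * (\<Sum>s\<in>UNIV. legendre_char s * \<psi> (s / 2))" if b: "b \<noteq> 0" for b
  proof -
    have "(\<Sum>x\<in>UNIV. \<psi> (b * x ^ 2 / 2)) = (\<Sum>t\<in>UNIV. (1 + legendre_char t) * \<psi> (b * t / 2))"
      using sum_over_squares[of "\<lambda>t. \<psi> (b * t / 2)"] by simp
    also have "\<dots> = (\<Sum>t\<in>UNIV. \<psi> ((b/2) * t)) + (\<Sum>t\<in>UNIV. legendre_char t * \<psi> (b * t / 2))"
      by (simp add: algebra_simps sum.distrib)
    also have "(\<Sum>t\<in>UNIV. \<psi> ((b/2) * t)) = 0"
      using character_sum_linear[of "b/2"] b two by (simp add: mult.commute)
    also have "(\<Sum>t\<in>UNIV. legendre_char t * \<psi> (b * t / 2)) =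
        (\<Sum>t\<in>UNIV. legendre_char ((1/b) * t) * \<psi> (b * ((1/b) * t) / 2))"
      using b by (intro sum_dilate[symmetric, of "1/b"]) simp
    also have "\<dots> = (\<Sum>t\<in>UNIV. legendre_char b * (legendre_char t * \<psi> (t / 2)))"
    proof (intro sum.cong refl)
      fix t
      have "legendre_char ((1/b) * t) = legendre_char b * legendre_char t"
        by (simp only: legendre_mult legendre_inverse)
      moreover have "b * ((1/b) * t) = t" using b by simp
      ultimately show "legendre_char ((1/b) * t) * \<psi> (b * ((1/b) * t) / 2) =
          legendre_char b * (legendre_char t * \<psi> (t / 2))" by simp
    qed
    finally show ?thesis by (simp add: sum_distrib_left)
  qed
  have "gauss_G1 \<psi> = (\<Sum>s\<in>UNIV. legendre_char s * \<psi> (s / 2))"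
    using key[of 1] unfolding gauss_G1_def by (simp add: legendre_one)
  then show ?thesis using key[OF a] by simp
qed

end

section \<open>Determinants in functional form\<close>

text \<open>The Leibniz determinant det_fun agrees with the determinant of the associated matrix,
  which gives access to the library's multiplicativity and block formulas.\<close>
lemma det_fun_det: "det_fun C k = det (mat k k (\<lambda>(i,j). C i j))"
  unfolding det_fun_def det_def by (simp add: atLeast0LessThan)

lemma det_fun_cong:
  assumes "\<And>i j. i < n \<Longrightarrow> j < n \<Longrightarrow> A i j = B i j"
  shows "det_fun A n = det_fun B n"
  unfolding det_fun_det by (rule arg_cong[where f=det], rule eq_matI) (use assms in auto)

lemma mult_entry:
  assumes "i < n" "j < n"
  shows "(mat n n (\<lambda>(i,j). A i j) * mat n n (\<lambda>(i,j). B i j)) $$ (i,j) = (\<Sum>k<n. A i k * B k j)"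
  using assms by (simp add: scalar_prod_def atLeast0LessThan)

lemma det_fun_mult:
  "det_fun (\<lambda>i j. \<Sum>k<n. A i k * B k j) n = det_fun A n * (det_fun B n :: 'a::comm_ring_1)"
proof -
  have "mat n n (\<lambda>(i,j). \<Sum>k<n. A i k * B k j) = mat n n (\<lambda>(i,j). A i j) * mat n n (\<lambda>(i,j). B i j)"
    by (rule eq_matI) (auto simp: scalar_prod_def atLeast0LessThan)
  then show ?thesis unfolding det_fun_det by (simp add: det_mult[of _ n])
qed

lemma det_fun_transpose: "det_fun (\<lambda>i j. A j i) n = det_fun A n"
proof -
  have "mat n n (\<lambda>(i,j). A j i) = transpose_mat (mat n n (\<lambda>(i,j). A i j))" by (rule eq_matI) auto
  then show ?thesis unfolding det_fun_det by (simp add: det_transpose[of _ n])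
qed

lemma det_fun_uminus: "det_fun (\<lambda>i j. - A i j) n = (-1) ^ n * (det_fun A n :: 'a::comm_ring_1)"
proof -
  have "mat n n (\<lambda>(i,j). - A i j) = (-1) \<cdot>\<^sub>m mat n n (\<lambda>(i,j). A i j)" by (rule eq_matI) auto
  then show ?thesis unfolding det_fun_det by simp
qed

lemma det_fun_unitriangular:
  assumes "\<And>i j. j < i \<Longrightarrow> i < n \<Longrightarrow> A i j = 0" "\<And>i. i < n \<Longrightarrow> A i i = 1"
  shows "det_fun A n = 1"
proof -
  have "upper_triangular (mat n n (\<lambda>(i,j). A i j))"
    unfolding upper_triangular_def using assms(1) by auto
  then have "det (mat n n (\<lambda>(i,j). A i j)) = prod_list (diag_mat (mat n n (\<lambda>(i,j). A i j)))"
    by (rule det_upper_triangular[of _ n]) auto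
  also have "diag_mat (mat n n (\<lambda>(i,j). A i j)) = map (\<lambda>_. 1) [0..<n]"
    unfolding diag_mat_def using assms(2) by simp
  also have "prod_list (map (\<lambda>_. 1) [0..<n]) = 1" by (induct n) auto
  finally show ?thesis by (simp add: det_fun_det)
qed

lemma det_fun_one_by_one: "det_fun D (Suc 0) = D 0 0"
  unfolding det_fun_def by (simp add: lessThan_Suc permutes_sing)

lemma det_fun_zero_row:
  assumes i: "i < m" and z: "\<And>k. k < m \<Longrightarrow> C i k = 0"
  shows "det_fun C m = 0"
  unfolding det_fun_def
proof (rule sum.neutral, rule ballI)
  fix p assume "p \<in> {p. p permutes {..<m}}"
  then have "p i < m" using i permutes_in_image by fastforce
  then have "(\<Prod>i<m. C i (p i)) = 0" using i z by (intro prod_zero) auto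
  then show "of_int (sign p) * (\<Prod>i<m. C i (p i)) = 0" by simp
qed

section \<open>Quadratic forms in coordinates\<close>

definition quad_form :: "(nat \<Rightarrow> nat \<Rightarrow> 'k::field) \<Rightarrow> nat \<Rightarrow> (nat \<Rightarrow> 'k) \<Rightarrow> 'k" where
  "quad_form C m c = (\<Sum>i<m. \<Sum>j<m. C i j * (c i * c j))"

abbreviation Kn :: "nat \<Rightarrow> (nat \<Rightarrow> 'k) set" where
  "Kn m \<equiv> PiE {..<m} (\<lambda>_. UNIV)"

lemma sum_Kn_Suc:
  "(\<Sum>c\<in>Kn (Suc n). F c) = (\<Sum>c\<in>Kn n. \<Sum>x\<in>(UNIV::'k::finite set). F (c(n := x)))"
proof -
  have "Kn (Suc n) = (\<lambda>(y, g). g(n := y)) ` ((UNIV::'k set) \<times> Kn n)"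
    using PiE_insert_eq[of n "{..<n}" "\<lambda>_. UNIV::'k set"] by (simp add: lessThan_Suc)
  moreover have "inj_on (\<lambda>(y, g). g(n := y)) ((UNIV::'k set) \<times> Kn n)"
    by (rule inj_combinator) simp
  ultimately have "(\<Sum>c\<in>Kn (Suc n). F c) = (\<Sum>(x,c)\<in>(UNIV::'k set) \<times> Kn n. F (c(n := x)))"
    by (simp add: sum.reindex case_prod_unfold)
  also have "\<dots> = (\<Sum>c\<in>Kn n. \<Sum>x\<in>(UNIV::'k set). F (c(n := x)))"
    by (simp add: sum.cartesian_product[symmetric] sum.swap[of _ UNIV])
  finally show ?thesis .
qed

lemma quad_form_cong: "(\<And>i. i < m \<Longrightarrow> c i = d i) \<Longrightarrow> quad_form C m c = quad_form C m d"
  unfolding quad_form_def by (intro sum.cong refl) auto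

lemma quad_form_upd: "quad_form C n (c(n := x)) = quad_form C n c"
  by (rule quad_form_cong) simp

definition schur :: "(nat \<Rightarrow> nat \<Rightarrow> 'k::field) \<Rightarrow> nat \<Rightarrow> nat \<Rightarrow> nat \<Rightarrow> 'k" where
  "schur C n i j = C i j - C i n * C n j / C n n"

lemma quad_form_schur:
  fixes C :: "nat \<Rightarrow> nat \<Rightarrow> 'k::field"
  assumes sym: "\<And>i j. i < Suc n \<Longrightarrow> j < Suc n \<Longrightarrow> C i j = C j i" and a: "C n n \<noteq> 0"
  shows "quad_form C (Suc n) c =
    quad_form (schur C n) n c + C n n * (c n + (\<Sum>j<n. C n j * c j) / C n n) ^ 2"
proof -
  define r where "r = (\<Sum>j<n. C n j * c j)"
  have "quad_form C (Suc n) c = quad_form C n c + (\<Sum>i<n. C i n * (c i * c n))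
      + (\<Sum>j<n. C n j * (c n * c j)) + C n n * (c n * c n)"
    unfolding quad_form_def by (simp add: sum.distrib)
  also have "(\<Sum>i<n. C i n * (c i * c n)) = c n * r"
    unfolding r_def by (simp add: sum_distrib_left sym algebra_simps)
  also have "(\<Sum>j<n. C n j * (c n * c j)) = c n * r"
    unfolding r_def by (simp add: sum_distrib_left algebra_simps)
  finally have full: "quad_form C (Suc n) c = quad_form C n c + 2 * c n * r + C n n * (c n * c n)"
    by simp
  have "quad_form (schur C n) n c =
      quad_form C n c - (\<Sum>i<n. \<Sum>j<n. (C i n * c i) * (C n j * c j)) / C n n"
    unfolding quad_form_def schur_def by (simp add: sum_subtractf sum_divide_distrib algebra_simps)
  also have "(\<Sum>i<n. \<Sum>j<n. (C i n * c i) * (C n j * c j)) = r * r"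
    unfolding r_def by (simp add: sum_product sym mult.commute)
  finally have schur_part: "quad_form (schur C n) n c = quad_form C n c - r * r / C n n" .
  show ?thesis unfolding full schur_part r_def[symmetric] using a by (simp add: field_simps power2_eq_square)
qed

lemma det_schur:
  fixes C :: "nat \<Rightarrow> nat \<Rightarrow> 'k::field"
  assumes a: "C n n \<noteq> 0"
  shows "det_fun C (Suc n) = C n n * det_fun (schur C n) n"
proof -
  define E where "E = (\<lambda>i j. if i = j then 1 else if j = n then - C i n / C n n else (0::'k))"
  let ?M = "mat (Suc n) (Suc n) (\<lambda>(i,j). C i j)"
  let ?E = "mat (Suc n) (Suc n) (\<lambda>(i,j). E i j)"
  let ?B = "four_block_mat (mat n n (\<lambda>(i,j). schur C n i j)) (0\<^sub>m n 1)
              (mat 1 n (\<lambda>(i,j). C n j)) (mat 1 1 (\<lambda>(i,j). C n n))"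
  have dE: "det ?E = 1" using det_fun_unitriangular[of "Suc n" E] by (auto simp: E_def det_fun_det)
  have "?E * ?M = ?B"
  proof (rule eq_matI)
    fix i j assume "i < dim_row ?B" "j < dim_col ?B"
    then have i: "i < Suc n" and j: "j < Suc n" by auto
    have "(?E * ?M) $$ (i,j) = (\<Sum>k<n. E i k * C k j) + E i n * C n j"
      using mult_entry[OF i j] by simp
    also have "\<dots> = (if i < n then C i j - C i n * C n j / C n n else C n j)"
    proof (cases "i < n")
      case True
      have "(\<Sum>k<n. E i k * C k j) = (\<Sum>k<n. if k = i then C k j else 0)"
        by (intro sum.cong refl) (auto simp: E_def)
      then show ?thesis using True by (simp add: E_def)
    next
      case False
      then have "i = n" using i by simp
      have "(\<Sum>k<n. E i k * C k j) = 0" by (intro sum.neutral) (auto simp: E_def \<open>i = n\<close>)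
      then show ?thesis using False \<open>i = n\<close> by (simp add: E_def)
    qed
    also have "\<dots> = ?B $$ (i,j)"
    proof (cases "j < n")
      case False
      then have "j = n" using j by simp
      then show ?thesis using i a by (auto simp: schur_def)
    qed (use i in \<open>auto simp: schur_def\<close>)
    finally show "(?E * ?M) $$ (i,j) = ?B $$ (i,j)" .
  qed auto
  then have "det_fun C (Suc n) = det ?B" using dE det_mult[of ?E "Suc n" ?M] by (simp add: det_fun_det)
  also have "\<dots> = det (mat n n (\<lambda>(i,j). schur C n i j)) * det (mat 1 1 (\<lambda>(i,j). C n n))"
    by (rule det_four_block_mat_upper_right_zero_col) auto
  finally show ?thesis
    using det_fun_one_by_one[of "\<lambda>_ _. C n n"] by (simp add: det_fun_det mult.commute)
qed

lemma sum_swap_pairs: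
  "(\<Sum>i\<in>I. \<Sum>k\<in>K. \<Sum>p\<in>P. \<Sum>q\<in>Q. (F i k p q::'a::comm_monoid_add)) =
   (\<Sum>p\<in>P. \<Sum>q\<in>Q. \<Sum>i\<in>I. \<Sum>k\<in>K. F i k p q)"
proof -
  have "(\<Sum>i\<in>I. \<Sum>k\<in>K. \<Sum>p\<in>P. \<Sum>q\<in>Q. F i k p q) = (\<Sum>i\<in>I. \<Sum>p\<in>P. \<Sum>k\<in>K. \<Sum>q\<in>Q. F i k p q)"
    by (rule sum.cong[OF refl], rule sum.swap)
  also have "\<dots> = (\<Sum>p\<in>P. \<Sum>i\<in>I. \<Sum>k\<in>K. \<Sum>q\<in>Q. F i k p q)"
    by (rule sum.swap)
  also have "\<dots> = (\<Sum>p\<in>P. \<Sum>i\<in>I. \<Sum>q\<in>Q. \<Sum>k\<in>K. F i k p q)"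
    by (rule sum.cong[OF refl], rule sum.cong[OF refl], rule sum.swap)
  also have "\<dots> = (\<Sum>p\<in>P. \<Sum>q\<in>Q. \<Sum>i\<in>I. \<Sum>k\<in>K. F i k p q)"
    by (rule sum.cong[OF refl], rule sum.swap)
  finally show ?thesis .
qed

lemma quad_form_congruence:
  "quad_form (\<lambda>i k. \<Sum>p<m. \<Sum>q<m. A p i * C p q * A q k) m c = quad_form C m (\<lambda>p. \<Sum>i<m. A p i * c i)"
proof -
  have "quad_form (\<lambda>i k. \<Sum>p<m. \<Sum>q<m. A p i * C p q * A q k) m c =
      (\<Sum>i<m. \<Sum>k<m. \<Sum>p<m. \<Sum>q<m. C p q * ((A p i * c i) * (A q k * c k)))"
    unfolding quad_form_def by (simp add: sum_distrib_left sum_distrib_right mult_ac)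
  also have "\<dots> = (\<Sum>p<m. \<Sum>q<m. \<Sum>i<m. \<Sum>k<m. C p q * ((A p i * c i) * (A q k * c k)))"
    by (rule sum_swap_pairs)
  also have "\<dots> = quad_form C m (\<lambda>p. \<Sum>i<m. A p i * c i)"
    unfolding quad_form_def sum_product by (simp only: sum_distrib_left)
  finally show ?thesis .
qed

lemma det_fun_congruence:
  "det_fun (\<lambda>i k. \<Sum>p<m. \<Sum>q<m. A p i * C p q * A q k) m = det_fun A m ^ 2 * (det_fun C m :: 'a::comm_ring_1)"
proof -
  have "det_fun (\<lambda>i k. \<Sum>p<m. \<Sum>q<m. A p i * C p q * A q k) m =
      det_fun (\<lambda>i k. \<Sum>p<m. A p i * (\<Sum>q<m. C p q * A q k)) m"
    by (simp add: sum_distrib_left mult.assoc)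
  also have "\<dots> = det_fun A m * (det_fun C m * det_fun A m)"
    by (simp only: det_fun_mult det_fun_transpose[of "\<lambda>i p. A p i", simplified])
  finally show ?thesis by (simp add: power2_eq_square algebra_simps)
qed

text \<open>The elementary matrix I + t E_{jn}; for j < n it is unitriangular.
  It is used to create a nonzero diagonal entry C_{nn} before completing the square.\<close>
definition shear :: "nat \<Rightarrow> nat \<Rightarrow> 'k::field \<Rightarrow> nat \<Rightarrow> nat \<Rightarrow> 'k" where
  "shear n j t p i = (if p = i then 1 else if p = j \<and> i = n then t else 0)"

lemma det_shear: "j < n \<Longrightarrow> det_fun (shear n j t) (Suc n) = 1"
  by (rule det_fun_unitriangular) (auto simp: shear_def)

lemma shear_row_sum:
  assumes "p < Suc n" "j < n"
  shows "(\<Sum>i<Suc n. shear n j t p i * c i) = c p + (if p = j then t * c n else 0)"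
proof -
  have "(\<Sum>i<Suc n. shear n j t p i * c i) =
      (\<Sum>i<Suc n. (if i = p then c i else 0) + (if i = n \<and> p = j then t * c i else 0))"
    using assms by (intro sum.cong refl) (auto simp: shear_def)
  then show ?thesis using assms by (simp add: sum.distrib)
qed

lemma shear_column_sum:
  assumes "i < Suc n" "j < n"
  shows "(\<Sum>p<Suc n. shear n j t p i * X p) = X i + (if i = n then t * X j else 0)"
proof -
  have "(\<Sum>p<Suc n. shear n j t p i * X p) =
      (\<Sum>p<Suc n. (if p = i then X p else 0) + (if p = j \<and> i = n then t * X p else 0))"
    using assms by (intro sum.cong refl) (auto simp: shear_def)
  then show ?thesis using assms by (simp add: sum.distrib)
qed

lemma sum_Kn_shear:
  fixes F :: "(nat \<Rightarrow> 'k::field) \<Rightarrow> complex"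
  assumes j: "j < n"
  shows "(\<Sum>c\<in>Kn (Suc n). F (c(j := c j + t * c n))) = (\<Sum>c\<in>Kn (Suc n). F c)"
proof (rule sum.reindex_bij_witness[where i="\<lambda>c. c(j := c j - t * c n)" and j="\<lambda>c. c(j := c j + t * c n)"])
  fix c :: "nat \<Rightarrow> 'k" assume c: "c \<in> Kn (Suc n)"
  show "(c(j := c j + t * c n))(j := (c(j := c j + t * c n)) j - t * (c(j := c j + t * c n)) n) = c"
    "(c(j := c j - t * c n))(j := (c(j := c j - t * c n)) j + t * (c(j := c j - t * c n)) n) = c"
    using j by auto
  show "c(j := c j + t * c n) \<in> Kn (Suc n)" "c(j := c j - t * c n) \<in> Kn (Suc n)"
    using c j by (auto simp: PiE_iff extensional_def)
qed simp

section \<open>Quadratic Gauss sums\<close>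

context additive_character
begin

text \<open>Inductive step in the case C_{nn} \<noteq> 0: completing the square in the last
  coordinate splits off a one-variable Gauss sum.\<close>
lemma gauss_sum_schur_step:
  fixes C :: "nat \<Rightarrow> nat \<Rightarrow> 'k"
  assumes IH: "\<And>C. (\<forall>i<n. \<forall>j<n. C i j = C j i) \<Longrightarrow> det_fun C n \<noteq> 0 \<Longrightarrow>
      (\<Sum>c\<in>Kn n. \<psi> (quad_form C n c / 2)) = gauss_G1 \<psi> ^ n * legendre_char (det_fun C n)"
    and sym: "\<forall>i<Suc n. \<forall>j<Suc n. C i j = C j i" and a: "C n n \<noteq> 0"
    and d: "det_fun C (Suc n) \<noteq> 0"
  shows "(\<Sum>c\<in>Kn (Suc n). \<psi> (quad_form C (Suc n) c / 2)) =
    gauss_G1 \<psi> ^ Suc n * legendre_char (det_fun C (Suc n))"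
proof -
  define r where "r = (\<lambda>c. (\<Sum>j<n. C n j * c j) / C n n)"
  let ?S = "schur C n"
  have schur_sym: "\<forall>i<n. \<forall>j<n. ?S i j = ?S j i"
    unfolding schur_def using sym by (auto simp: mult.commute)
  have dd: "det_fun C (Suc n) = C n n * det_fun ?S n" using det_schur[of C n, OF a] .
  have r_upd: "r (c(n := x)) = r c" for c x
    unfolding r_def by (intro arg_cong[where f="\<lambda>s. s / C n n"] sum.cong) auto
  have split: "quad_form C (Suc n) (c(n := x)) = quad_form ?S n c + C n n * (x + r c) ^ 2" for c x
    using quad_form_schur[where C=C and c="c(n := x)", OF _ a] sym r_upd[of c x]
    by (simp add: r_def quad_form_upd)
  have "(\<Sum>c\<in>Kn (Suc n). \<psi> (quad_form C (Suc n) c / 2)) =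
      (\<Sum>c\<in>Kn n. \<Sum>x\<in>UNIV. \<psi> (quad_form ?S n c / 2) * \<psi> (C n n * (x + r c) ^ 2 / 2))"
    unfolding sum_Kn_Suc split by (simp add: add_divide_distrib hom)
  also have "\<dots> = (legendre_char (C n n) * gauss_G1 \<psi>) * (\<Sum>c\<in>Kn n. \<psi> (quad_form ?S n c / 2))"
    by (simp add: sum_distrib_left[symmetric] sum_translate[of "\<lambda>x. \<psi> (C n n * x ^ 2 / 2)"]
        gauss_sum_scaled[OF a] sum_distrib_right mult.commute)
  also have "\<dots> = (legendre_char (C n n) * gauss_G1 \<psi>) * (gauss_G1 \<psi> ^ n * legendre_char (det_fun ?S n))"
    using IH[OF schur_sym] d dd by simp
  also have "\<dots> = gauss_G1 \<psi> ^ Suc n * legendre_char (det_fun C (Suc n))"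
    unfolding dd legendre_mult by (simp add: algebra_simps)
  finally show ?thesis .
qed

text \<open>If C_{nn} = 0 but the form is nondegenerate, a shear creates a nonzero diagonal entry
  without changing the Gauss sum or the determinant.\<close>
lemma shear_nonzero_corner:
  fixes C :: "nat \<Rightarrow> nat \<Rightarrow> 'k"
  assumes sym: "\<forall>i<Suc n. \<forall>j<Suc n. C i j = C j i" and j: "j < n"
    and zero: "C n n = 0" and b: "C n j \<noteq> 0"
  obtains t where "(\<Sum>p<Suc n. \<Sum>q<Suc n. shear n j t p n * C p q * shear n j t q n) \<noteq> 0"
proof -
  have entry: "(\<Sum>p<Suc n. \<Sum>q<Suc n. shear n j t p n * C p q * shear n j t q n) =
      2 * t * C n j + t * t * C j j" for t
  proof -
    have "(\<Sum>p<Suc n. \<Sum>q<Suc n. shear n j t p n * C p q * shear n j t q n) =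
        (\<Sum>p<Suc n. shear n j t p n * (\<Sum>q<Suc n. shear n j t q n * C p q))"
      by (intro sum.cong refl) (simp add: sum_distrib_left mult_ac del: sum.lessThan_Suc)
    also have "\<dots> = (\<Sum>p<Suc n. shear n j t p n * (C p n + t * C p j))"
      using shear_column_sum[OF lessI j, of t "C p" for p] by simp
    also have "\<dots> = (C n n + t * C n j) + t * (C j n + t * C j j)"
      using shear_column_sum[OF lessI j, of t "\<lambda>p. C p n + t * C p j"] by simp
    finally show ?thesis using zero sym j by (simp add: algebra_simps)
  qed
  have "2 * 1 * C n j + 1 * 1 * C j j \<noteq> 0 \<or> 2 * (-1) * C n j + (-1) * (-1) * C j j \<noteq> 0"
  proof (rule ccontr)
    assume "\<not> ?thesis"
    then have e1: "2 * 1 * C n j + 1 * 1 * C j j = 0"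
      and e2: "2 * (-1) * C n j + (-1) * (-1) * C j j = 0" by blast+
    have "2 * (2 * C n j) = (2 * 1 * C n j + 1 * 1 * C j j) - (2 * (-1) * C n j + (-1) * (-1) * C j j)"
      by (simp add: algebra_simps)
    then have "2 * (2 * C n j) = 0" by (simp only: e1 e2 diff_self)
    then show False using b two by (simp only: mult_eq_0_iff) simp
  qed
  then show ?thesis using entry that by metis
qed

theorem gauss_sum_quadratic_form:
  fixes C :: "nat \<Rightarrow> nat \<Rightarrow> 'k"
  assumes "\<forall>i<m. \<forall>j<m. C i j = C j i" and "det_fun C m \<noteq> 0"
  shows "(\<Sum>c\<in>Kn m. \<psi> (quad_form C m c / 2)) = gauss_G1 \<psi> ^ m * legendre_char (det_fun C m)"
  using assms
proof (induction m arbitrary: C)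
  case 0
  have "det_fun C 0 = 1" by (rule det_fun_unitriangular) auto
  then show ?case by (simp add: quad_form_def psi_zero legendre_one)
next
  case (Suc n)
  show ?case
  proof (cases "C n n = 0")
    case False
    then show ?thesis using gauss_sum_schur_step[OF Suc.IH Suc.prems(1) False Suc.prems(2)] by blast
  next
    case True
    have "\<exists>j<n. C n j \<noteq> 0"
    proof (rule ccontr)
      assume "\<not> ?thesis"
      then have "det_fun C (Suc n) = 0" using True by (intro det_fun_zero_row[of n]) (auto simp: less_Suc_eq)
      then show False using Suc.prems by simp
    qed
    then obtain j where j: "j < n" and b: "C n j \<noteq> 0" by blast
    obtain t where t: "(\<Sum>p<Suc n. \<Sum>q<Suc n. shear n j t p n * C p q * shear n j t q n) \<noteq> 0"
      using shear_nonzero_corner[OF Suc.prems(1) j True b] by blast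
    define C' where "C' = (\<lambda>i k. \<Sum>p<Suc n. \<Sum>q<Suc n. shear n j t p i * C p q * shear n j t q k)"
    have sym': "\<forall>i<Suc n. \<forall>k<Suc n. C' i k = C' k i"
      unfolding C'_def using Suc.prems(1)
      by (intro allI impI, subst sum.swap) (intro sum.cong refl; simp add: mult_ac)
    have det': "det_fun C' (Suc n) = det_fun C (Suc n)"
      unfolding C'_def det_fun_congruence det_shear[OF j] by simp
    have "(\<Sum>c\<in>Kn (Suc n). \<psi> (quad_form C (Suc n) c / 2)) =
        (\<Sum>c\<in>Kn (Suc n). \<psi> (quad_form C (Suc n) (c(j := c j + t * c n)) / 2))"
      by (rule sum_Kn_shear[OF j, symmetric])
    also have "\<dots> = (\<Sum>c\<in>Kn (Suc n). \<psi> (quad_form C' (Suc n) c / 2))"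
    proof (intro sum.cong refl arg_cong[where f=\<psi>] arg_cong[where f="\<lambda>x. x / 2"])
      fix c :: "nat \<Rightarrow> 'k"
      have "quad_form C' (Suc n) c = quad_form C (Suc n) (\<lambda>p. \<Sum>i<Suc n. shear n j t p i * c i)"
        unfolding C'_def by (rule quad_form_congruence)
      also have "\<dots> = quad_form C (Suc n) (c(j := c j + t * c n))"
        using j by (intro quad_form_cong) (simp add: shear_row_sum del: sum.lessThan_Suc)
      finally show "quad_form C (Suc n) (c(j := c j + t * c n)) = quad_form C' (Suc n) c" by simp
    qed
    also have "\<dots> = gauss_G1 \<psi> ^ Suc n * legendre_char (det_fun C' (Suc n))"
      using gauss_sum_schur_step[OF Suc.IH sym'] t det' Suc.prems(2) by (simp add: C'_def)
    finally show ?thesis using det' by simp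
  qed
qed

text \<open>The classical evaluation G_1^2 = \<sigma>(-1) q, obtained by computing the Gauss sum of the
  binary form 2xy + y^2 (determinant -1) directly: the sum over x forces y = 0.\<close>
lemma gauss_G1_square: "gauss_G1 \<psi> ^ 2 = legendre_char (-1::'k) * of_nat (card (UNIV::'k set))"
proof -
  define C :: "nat \<Rightarrow> nat \<Rightarrow> 'k" where "C = (\<lambda>i j. if i = 1 \<and> j = 1 then 1 else if i = j then 0 else 1)"
  have "det_fun C 2 = C 1 1 * det_fun (schur C 1) 1"
    using det_schur[of C 1] by (simp add: C_def numeral_2_eq_2)
  also have "\<dots> = -1" by (simp add: det_fun_one_by_one schur_def C_def)
  finally have d: "det_fun C 2 = -1" .
  have sym: "\<forall>i<2. \<forall>j<2. C i j = C j i" by (auto simp: C_def)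
  have "(\<Sum>c\<in>Kn 2. \<psi> (quad_form C 2 c / 2)) = of_nat (card (UNIV::'k set))"
  proof -
    have q: "quad_form C 2 (((\<lambda>_. undefined)(0 := x))(Suc 0 := y)) = 2 * (x * y) + y * y" for x y
      unfolding quad_form_def by (simp add: C_def numeral_2_eq_2 lessThan_Suc)
    have "(\<Sum>c\<in>Kn 2. \<psi> (quad_form C 2 c / 2)) =
        (\<Sum>x\<in>UNIV. \<Sum>y\<in>UNIV. \<psi> (quad_form C 2 (((\<lambda>_. undefined)(0 := x))(Suc 0 := y)) / 2))"
      unfolding numeral_2_eq_2 sum_Kn_Suc by (simp add: fun_upd_def)
    also have "\<dots> = (\<Sum>y\<in>UNIV. (\<Sum>x\<in>UNIV. \<psi> (x * y)) * \<psi> (y * y / 2))"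
      unfolding q using two by (subst sum.swap) (simp add: add_divide_distrib hom sum_distrib_right)
    also have "\<dots> = (\<Sum>y\<in>UNIV. if (y::'k) = 0 then of_nat (card (UNIV::'k set)) else 0)"
      unfolding character_sum_linear by (rule sum.cong) (auto simp: psi_zero)
    also have "\<dots> = of_nat (card (UNIV::'k set))" by simp
    finally show ?thesis .
  qed
  then have "gauss_G1 \<psi> ^ 2 * legendre_char (-1::'k) = of_nat (card (UNIV::'k set))"
    using gauss_sum_quadratic_form[OF sym] d by simp
  then have "gauss_G1 \<psi> ^ 2 * (legendre_char (-1::'k) * legendre_char (-1::'k)) =
      legendre_char (-1::'k) * of_nat (card (UNIV::'k set))"
    by (metis mult.assoc mult.commute)
  then show ?thesis using legendre_self_mult[of "-1::'k"] by simp
qed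

end

section \<open>Symplectic spaces and oriented Lagrangians\<close>

locale symplectic_space = vs: vector_space scale
  for scale :: "'k::field \<Rightarrow> 'v::ab_group_add \<Rightarrow> 'v" +
  fixes \<omega> :: "'v \<Rightarrow> 'v \<Rightarrow> 'k" and n :: nat
  assumes dimV: "vs.dim (UNIV :: 'v set) = 2 * n"
    and sympl: "symplectic_form scale \<omega>"
begin

lemma omega_addl: "\<omega> (x + y) z = \<omega> x z + \<omega> y z" using sympl unfolding symplectic_form_def by blast
lemma omega_addr: "\<omega> x (y + z) = \<omega> x y + \<omega> x z" using sympl unfolding symplectic_form_def by blast
lemma omega_scalel: "\<omega> (scale c x) y = c * \<omega> x y" using sympl unfolding symplectic_form_def by blast
lemma omega_scaler: "\<omega> x (scale c y) = c * \<omega> x y" using sympl unfolding symplectic_form_def by blast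
lemma omega_self: "\<omega> x x = 0" using sympl unfolding symplectic_form_def by blast
lemma omega_nondegenerate: "(\<And>y. \<omega> x y = 0) \<Longrightarrow> x = 0" using sympl unfolding symplectic_form_def by blast

lemma omega_antisym: "\<omega> y x = - \<omega> x y"
  using omega_self[of "x + y"] omega_self[of x] omega_self[of y]
  by (simp add: omega_addl omega_addr eq_neg_iff_add_eq_0)

lemma omega_zerol [simp]: "\<omega> 0 y = 0"
proof -
  have "\<omega> 0 y + \<omega> 0 y = \<omega> 0 y + 0" using omega_addl[of 0 0 y] by simp
  then show ?thesis by (simp only: add_left_cancel)
qed

lemma omega_zeror [simp]: "\<omega> x 0 = 0"
  using omega_antisym[of 0 x] omega_zerol by simp

lemma omega_negl: "\<omega> (- x) y = - \<omega> x y"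
  using omega_addl[of x "- x" y] by (simp add: eq_neg_iff_add_eq_0 add.commute)

lemma omega_diffl: "\<omega> (x - y) z = \<omega> x z - \<omega> y z"
  using omega_addl[of x "- y" z] omega_negl by simp

lemma omega_suml: "\<omega> (\<Sum>i\<in>A. g i) y = (\<Sum>i\<in>A. \<omega> (g i) y)"
  by (induct A rule: infinite_finite_induct) (auto simp: omega_addl)

lemma omega_negr: "\<omega> x (- y) = - \<omega> x y"
  using omega_addr[of x y "- y"] by (simp add: eq_neg_iff_add_eq_0 add.commute)

lemma omega_diffr: "\<omega> x (y - z) = \<omega> x y - \<omega> x z"
  using omega_addr[of x y "- z"] omega_negr by simp

lemma omega_sumr: "\<omega> x (\<Sum>i\<in>A. g i) = (\<Sum>i\<in>A. \<omega> x (g i))"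
  by (induct A rule: infinite_finite_induct) (auto simp: omega_addr)

definition lin_comb :: "'v list \<Rightarrow> (nat \<Rightarrow> 'k) \<Rightarrow> 'v" where
  "lin_comb xs c = (\<Sum>i<length xs. scale (c i) (xs ! i))"

lemma omega_lin_combl: "\<omega> (lin_comb xs c) y = (\<Sum>i<length xs. c i * \<omega> (xs ! i) y)"
  unfolding lin_comb_def omega_suml by (simp add: omega_scalel)

lemma omega_lin_combr: "\<omega> y (lin_comb xs c) = (\<Sum>i<length xs. c i * \<omega> y (xs ! i))"
  unfolding lin_comb_def omega_sumr by (simp add: omega_scaler)

lemma lin_comb_diff: "lin_comb xs (\<lambda>i. c i - d i) = lin_comb xs c - lin_comb xs d"
  unfolding lin_comb_def by (simp add: vs.scale_left_diff_distrib sum_subtractf)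

lemma lin_comb_in_span: "lin_comb xs c \<in> vs.span (set xs)"
  unfolding lin_comb_def by (intro vs.span_sum vs.span_scale vs.span_base) auto

lemma span_lin_comb: assumes "distinct xs" "x \<in> vs.span (set xs)" shows "\<exists>c. x = lin_comb xs c"
proof -
  obtain u where "x = (\<Sum>v\<in>set xs. scale (u v) v)"
    using assms(2) vs.span_finite[of "set xs"] by auto
  also have "\<dots> = (\<Sum>i<length xs. scale (u (xs ! i)) (xs ! i))"
    using sum.reindex_bij_betw[OF bij_betw_nth[OF assms(1) refl refl], of "\<lambda>v. scale (u v) v"] by simp
  finally show ?thesis unfolding lin_comb_def by (intro exI[of _ "\<lambda>i. u (xs ! i)"])
qed

lemma lin_comb_zero:
  assumes ind: "vs.independent (set xs)" and d: "distinct xs" and z: "lin_comb xs c = 0"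
    and i: "i < length xs"
  shows "c i = 0"
proof -
  define idx where "idx = inv_into {..<length xs} ((!) xs)"
  have bij: "bij_betw ((!) xs) {..<length xs} (set xs)" by (rule bij_betw_nth[OF d refl refl])
  have idx_nth: "idx (xs ! j) = j" if "j < length xs" for j
    unfolding idx_def using bij that by (simp add: bij_betw_def inv_into_f_f)
  have "(\<Sum>v\<in>set xs. scale (c (idx v)) v) = (\<Sum>j<length xs. scale (c (idx (xs ! j))) (xs ! j))"
    using sum.reindex_bij_betw[OF bij, of "\<lambda>v. scale (c (idx v)) v"] by simp
  also have "\<dots> = lin_comb xs c" unfolding lin_comb_def by (intro sum.cong refl) (simp add: idx_nth)
  finally have "c (idx (xs ! i)) = 0"
    using vs.independentD[OF ind, of "set xs" "\<lambda>v. c (idx v)" "xs ! i"] i z by simp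
  then show ?thesis using idx_nth[OF i] by simp
qed

lemma ol_length:
  assumes "oriented_lagrangian scale \<omega> X xs" shows "length xs = n"
proof -
  have "2 * vs.dim X = 2 * n" using assms dimV unfolding oriented_lagrangian_def lagrangian_def by simp
  moreover have "vs.dim X = card (set xs)"
    using assms vs.dim_span_eq_card_independent unfolding oriented_lagrangian_def by metis
  ultimately show ?thesis using assms distinct_card unfolding oriented_lagrangian_def by fastforce
qed

lemma ol_subspace: "oriented_lagrangian scale \<omega> X xs \<Longrightarrow> vs.subspace X"
  unfolding oriented_lagrangian_def lagrangian_def by blast

lemma ol_isotropic: "oriented_lagrangian scale \<omega> X xs \<Longrightarrow> x \<in> X \<Longrightarrow> y \<in> X \<Longrightarrow> \<omega> x y = 0"
  unfolding oriented_lagrangian_def lagrangian_def by blast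

lemma ol_basis_mem: "oriented_lagrangian scale \<omega> X xs \<Longrightarrow> i < length xs \<Longrightarrow> xs ! i \<in> X"
  unfolding oriented_lagrangian_def using vs.span_base by (metis nth_mem)

lemma ol_lin_comb: "oriented_lagrangian scale \<omega> X xs \<Longrightarrow> lin_comb xs c \<in> X"
  unfolding oriented_lagrangian_def using lin_comb_in_span by blast

lemma ol_coordinates: "oriented_lagrangian scale \<omega> X xs \<Longrightarrow> x \<in> X \<Longrightarrow> \<exists>c. x = lin_comb xs c"
  unfolding oriented_lagrangian_def using span_lin_comb by blast

lemma ol_coordinates_zero:
  "oriented_lagrangian scale \<omega> X xs \<Longrightarrow> lin_comb xs c = 0 \<Longrightarrow> i < n \<Longrightarrow> c i = 0"
  using lin_comb_zero ol_length unfolding oriented_lagrangian_def by blast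

lemma sum_ol_coordinates:
  assumes ol: "oriented_lagrangian scale \<omega> X xs"
  shows "(\<Sum>x\<in>X. G x) = (\<Sum>c\<in>Kn n. (G (lin_comb xs c) :: complex))"
proof -
  have len: "length xs = n" using ol_length[OF ol] .
  have "bij_betw (lin_comb xs) (Kn n) X"
  proof (rule bij_betwI')
    fix c d :: "nat \<Rightarrow> 'k" assume c: "c \<in> Kn n" and d: "d \<in> Kn n"
    show "(lin_comb xs c = lin_comb xs d) = (c = d)"
    proof
      assume "lin_comb xs c = lin_comb xs d"
      then have "c i - d i = 0" if "i < n" for i
        using ol_coordinates_zero[OF ol, of "\<lambda>i. c i - d i"] that by (simp add: lin_comb_diff)
      then show "c = d" using c d by (intro PiE_ext) auto
    qed simp
  next
    fix c :: "nat \<Rightarrow> 'k" show "lin_comb xs c \<in> X" using ol_lin_comb[OF ol] .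
  next
    fix x assume "x \<in> X"
    then obtain d where d: "x = lin_comb xs d" using ol_coordinates[OF ol] by blast
    have "lin_comb xs (restrict d {..<n}) = lin_comb xs d"
      unfolding lin_comb_def len by (intro sum.cong refl) auto
    then show "\<exists>c\<in>Kn n. x = lin_comb xs c" using d by (intro bexI[of _ "restrict d {..<n}"]) auto
  qed
  then show ?thesis using sum.reindex_bij_betw[of "lin_comb xs" "Kn n" X G] by simp
qed

definition pairing :: "'v list \<Rightarrow> 'v list \<Rightarrow> nat \<Rightarrow> nat \<Rightarrow> 'k" where
  "pairing ys xs i j = \<omega> (ys ! i) (xs ! j)"

text \<open>Two Lagrangians in general position are paired nondegenerately by \<omega>: a vector of Y
  orthogonal to X is orthogonal to X + Y = V, hence zero.\<close>
lemma pairing_det_nonzero: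
  assumes olX: "oriented_lagrangian scale \<omega> X xs" and olY: "oriented_lagrangian scale \<omega> Y ys"
    and g: "general_position X Y"
  shows "det_fun (pairing ys xs) n \<noteq> 0"
proof
  let ?W = "transpose_mat (mat n n (\<lambda>(i,j). pairing ys xs i j))"
  assume "det_fun (pairing ys xs) n = 0"
  then have "det ?W = 0" by (simp add: det_fun_det det_transpose[of _ n])
  then obtain v where v: "v \<in> carrier_vec n" "v \<noteq> 0\<^sub>v n" "?W *\<^sub>v v = 0\<^sub>v n"
    using det_0_iff_vec_prod_zero_field[of ?W n] by auto
  have lx: "length xs = n" and ly: "length ys = n" using ol_length olX olY by auto
  define y where "y = lin_comb ys (\<lambda>i. v $ i)"
  have yY: "y \<in> Y" unfolding y_def by (rule ol_lin_comb[OF olY])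
  have y_basis: "\<omega> y (xs ! j) = 0" if j: "j < n" for j
  proof -
    have "(?W *\<^sub>v v) $ j = (\<Sum>i<n. \<omega> (ys ! i) (xs ! j) * v $ i)"
      using j v(1) by (simp add: scalar_prod_def atLeast0LessThan pairing_def)
    also have "\<dots> = \<omega> y (xs ! j)" unfolding y_def omega_lin_combl ly by (simp add: mult.commute)
    finally show ?thesis using v(3) j by simp
  qed
  have "\<omega> y u = 0" for u
  proof -
    obtain x y' where x: "x \<in> X" and y': "y' \<in> Y" and u: "u = x + y'"
      using g unfolding general_position_def by blast
    obtain d where d: "x = lin_comb xs d" using ol_coordinates[OF olX x] by blast
    have "\<omega> y x = 0" unfolding d omega_lin_combr lx using y_basis by simp
    moreover have "\<omega> y y' = 0" using ol_isotropic[OF olY yY y'] .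
    ultimately show ?thesis unfolding u omega_addr by simp
  qed
  then have "y = 0" by (rule omega_nondegenerate)
  then have "v $ i = 0" if "i < n" for i
    using ol_coordinates_zero[OF olY, of "\<lambda>i. v $ i" i] that unfolding y_def by simp
  then have "v = 0\<^sub>v n" using v(1) by (intro eq_vecI) auto
  then show False using v(2) by simp
qed

end

section \<open>The cross form of a transversal triple\<close>

definition splitting :: "'v::ab_group_add set \<Rightarrow> 'v set \<Rightarrow> 'v list \<Rightarrow> (nat \<Rightarrow> 'v) \<Rightarrow> (nat \<Rightarrow> 'v) \<Rightarrow> bool" where
  "splitting N L ms \<alpha> \<beta> \<longleftrightarrow> (\<forall>j<length ms. \<alpha> j \<in> N \<and> \<beta> j \<in> L \<and> ms ! j = \<alpha> j + \<beta> j)"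

lemma splitting_exists:
  assumes "general_position N L" obtains \<alpha> \<beta> where "splitting N L ms \<alpha> \<beta>"
proof -
  have "\<forall>j. \<exists>a b. a \<in> N \<and> b \<in> L \<and> ms ! j = a + b"
    using assms unfolding general_position_def by blast
  then obtain \<alpha> \<beta> where "\<And>j. \<alpha> j \<in> N \<and> \<beta> j \<in> L \<and> ms ! j = \<alpha> j + \<beta> j" by metis
  then show ?thesis using that unfolding splitting_def by blast
qed

context symplectic_space
begin

text \<open>The Gram matrix of the quadratic form m \<mapsto> \<omega>(a, b) on M, where m = a + b is the
  decomposition along N + L.\<close>
definition cross_form :: "(nat \<Rightarrow> 'v) \<Rightarrow> (nat \<Rightarrow> 'v) \<Rightarrow> nat \<Rightarrow> nat \<Rightarrow> 'k" where
  "cross_form \<alpha> \<beta> i j = \<omega> (\<alpha> i) (\<beta> j)"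

text \<open>Symmetry comes from isotropy of M: 0 = \<omega>(m_i, m_j) = \<omega>(\<alpha>_i, \<beta>_j) + \<omega>(\<beta>_i, \<alpha>_j).\<close>
lemma cross_form_symmetric:
  assumes olN: "oriented_lagrangian scale \<omega> N oN" and olM: "oriented_lagrangian scale \<omega> M oM"
    and olL: "oriented_lagrangian scale \<omega> L oL" and spl: "splitting N L oM \<alpha> \<beta>"
  shows "\<forall>i<n. \<forall>j<n. cross_form \<alpha> \<beta> i j = cross_form \<alpha> \<beta> j i"
proof (intro allI impI)
  fix i j assume i: "i < n" and j: "j < n"
  have lM: "length oM = n" using ol_length[OF olM] .
  have N: "\<alpha> i \<in> N" "\<alpha> j \<in> N" and L: "\<beta> i \<in> L" "\<beta> j \<in> L"
    and m: "oM ! i = \<alpha> i + \<beta> i" "oM ! j = \<alpha> j + \<beta> j"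
    using spl i j lM unfolding splitting_def by auto
  have "0 = \<omega> (oM ! i) (oM ! j)"
    using ol_isotropic[OF olM ol_basis_mem[OF olM] ol_basis_mem[OF olM]] i j lM by simp
  also have "\<dots> = \<omega> (\<alpha> i) (\<beta> j) + \<omega> (\<beta> i) (\<alpha> j)"
    unfolding m omega_addl omega_addr
    using ol_isotropic[OF olN N(1) N(2)] ol_isotropic[OF olL L(1) L(2)] by simp
  finally have "\<omega> (\<alpha> i) (\<beta> j) + \<omega> (\<beta> i) (\<alpha> j) = 0" by simp
  moreover have "\<omega> (\<alpha> j) (\<beta> i) + \<omega> (\<beta> i) (\<alpha> j) = 0" using omega_antisym[of "\<alpha> j" "\<beta> i"] by simp
  ultimately show "cross_form \<alpha> \<beta> i j = cross_form \<alpha> \<beta> j i"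
    unfolding cross_form_def by (metis add_right_cancel)
qed

text \<open>Writing \<alpha>_j = \<Sum>_k P_{jk} n_k in the basis of N, both the cross form and the pairing of
  L with M factor through P; eliminating det P gives a relation between determinants.\<close>
lemma cross_form_det:
  assumes olN: "oriented_lagrangian scale \<omega> N oN" and olM: "oriented_lagrangian scale \<omega> M oM"
    and olL: "oriented_lagrangian scale \<omega> L oL" and spl: "splitting N L oM \<alpha> \<beta>"
  shows "det_fun (cross_form \<alpha> \<beta>) n * det_fun (pairing oL oN) n =
    (-1) ^ n * det_fun (pairing oM oN) n * det_fun (pairing oL oM) n"
proof -
  have lN: "length oN = n" and lM: "length oM = n" and lL: "length oL = n"
    using ol_length olN olM olL by auto
  have N: "\<And>j. j < n \<Longrightarrow> \<alpha> j \<in> N" and L: "\<And>j. j < n \<Longrightarrow> \<beta> j \<in> L"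
    and m: "\<And>j. j < n \<Longrightarrow> oM ! j = \<alpha> j + \<beta> j"
    using spl lM unfolding splitting_def by auto
  have "\<forall>j. \<exists>c. j < n \<longrightarrow> \<alpha> j = lin_comb oN c" using ol_coordinates[OF olN N] by blast
  then obtain P where P: "\<And>j. j < n \<Longrightarrow> \<alpha> j = lin_comb oN (P j)" by metis
  have LM: "pairing oL oM i j = (\<Sum>k<n. pairing oL oN i k * P j k)" if "i < n" "j < n" for i j
  proof -
    have "\<omega> (oL ! i) (\<beta> j) = 0" using ol_isotropic[OF olL ol_basis_mem[OF olL] L] that lL by simp
    then show ?thesis
      unfolding pairing_def m[OF that(2)] omega_addr P[OF that(2)] omega_lin_combr lN
      by (simp add: mult.commute)
  qed
  have C: "cross_form \<alpha> \<beta> i j = (\<Sum>k<n. P i k * - pairing oM oN j k)" if "i < n" "j < n" for i j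
  proof -
    have "\<omega> (oN ! k) (\<beta> j) = - pairing oM oN j k" if "k < n" for k
    proof -
      have "\<omega> (\<alpha> j) (oN ! k) = 0" using ol_isotropic[OF olN N ol_basis_mem[OF olN]] \<open>j < n\<close> that lN by simp
      then show ?thesis
        unfolding pairing_def m[OF \<open>j < n\<close>] omega_addl using omega_antisym[of "\<beta> j" "oN ! k"] by simp
    qed
    then show ?thesis unfolding cross_form_def P[OF that(1)] omega_lin_combl lN by simp
  qed
  have "det_fun (pairing oL oM) n = det_fun (pairing oL oN) n * det_fun P n"
    using det_fun_cong[where A="pairing oL oM", OF LM]
      det_fun_mult[where n=n and A="pairing oL oN" and B="\<lambda>k j. P j k"] det_fun_transpose[of P n] by simp
  moreover have "det_fun (cross_form \<alpha> \<beta>) n = det_fun P n * ((-1) ^ n * det_fun (pairing oM oN) n)"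
    using det_fun_cong[where A="cross_form \<alpha> \<beta>", OF C]
      det_fun_mult[where n=n and A=P and B="\<lambda>k j. - pairing oM oN j k"]
      det_fun_uminus[of "\<lambda>k j. pairing oM oN j k" n] det_fun_transpose[of "pairing oM oN" n] by simp
  ultimately show ?thesis by (simp add: algebra_simps)
qed

end

text \<open>The arithmetic of the normalising constants: with c = G_1/q, the determinant relation
  of the cross form turns c^m \<sigma>(d_NM) \<cdot> c^m \<sigma>(d_ML) \<cdot> G_1^m \<sigma>(d_C) into c^m \<sigma>(d_NL),
  using multiplicativity of \<sigma> and G_1^2 = \<sigma>(-1) q.\<close>
lemma (in additive_character) weil_constant_identity:
  fixes dC dNL dNM dML :: 'k
  assumes rel: "dC * dNL = (-1) ^ m * dNM * dML"
    and nz: "dNL \<noteq> 0" "dNM \<noteq> 0" "dML \<noteq> 0"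
  defines "c \<equiv> gauss_G1 \<psi> / of_nat (card (UNIV :: 'k set))"
  shows "c ^ m * legendre_char dNM * (c ^ m * legendre_char dML) * (gauss_G1 \<psi> ^ m * legendre_char dC) =
    c ^ m * legendre_char dNL"
proof -
  define s where "s = legendre_char (-1::'k)"
  define u where "u = legendre_char dNM"
  define v where "v = legendre_char dML"
  define w where "w = legendre_char dNL"
  have u2: "u * u = 1" and v2: "v * v = 1" and w2: "w * w = 1" and s2: "s * s = 1"
    unfolding u_def v_def w_def s_def using legendre_self_mult nz by auto
  have cG: "c * gauss_G1 \<psi> = s"
    using gauss_G1_square unfolding c_def s_def by (simp add: power2_eq_square)
  have "legendre_char dC * w = s ^ m * u * v"
    using arg_cong[OF rel, of legendre_char] unfolding s_def u_def v_def w_def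
    by (simp only: legendre_mult legendre_power)
  then have sC: "legendre_char dC = s ^ m * u * v * w"
    using w2 by (metis mult.assoc mult_1_right)
  have "c ^ m * u * (c ^ m * v) * (gauss_G1 \<psi> ^ m * legendre_char dC) =
      c ^ m * w * ((c * gauss_G1 \<psi>) ^ m * s ^ m) * (u * u) * (v * v)"
    unfolding sC by (simp add: power_mult_distrib mult_ac)
  also have "\<dots> = c ^ m * w * (s * s) ^ m"
    unfolding cG u2 v2 by (simp add: power_mult_distrib)
  finally show ?thesis unfolding s2 u_def v_def w_def by simp
qed

section \<open>Composition of the intertwining operators\<close>

locale heisenberg_setting = additive_character \<psi> + symplectic_space scale \<omega> n
  for \<psi> :: "'k::{field,finite} \<Rightarrow> complex" and scale :: "'k \<Rightarrow> 'v::ab_group_add \<Rightarrow> 'v"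
    and \<omega> :: "'v \<Rightarrow> 'v \<Rightarrow> 'k" and n :: nat
begin

lemma heis_mult_split:
  assumes olN: "oriented_lagrangian scale \<omega> N oN" and a: "a \<in> N" and y: "y \<in> N"
  shows "heis_mult \<omega> (a + b, 0) (heis_mult \<omega> (y - a, 0) h) =
         heis_mult \<omega> (heis_mult \<omega> (0, \<omega> a b / 2) (b, 0)) (heis_mult \<omega> (y, 0) h)"
proof -
  obtain hv hz where h: "h = (hv, hz)" by (cases h)
  have ay: "\<omega> a y = 0" using ol_isotropic[OF olN a y] .
  have ba: "\<omega> b a = - \<omega> a b" by (rule omega_antisym)
  have "hz + \<omega> (y - a) hv / 2 + \<omega> (a + b) (y - a + hv) / 2 =
        \<omega> a b / 2 + (hz + \<omega> y hv / 2) + \<omega> b (y + hv) / 2"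
    using two by (simp add: omega_addl omega_addr omega_diffl omega_diffr ay ba omega_self field_simps)
  then show ?thesis unfolding h heis_mult_def by (simp add: algebra_simps)
qed

text \<open>Translating the summation variable of F_N by a \<in> N and using the L-equivariance of f.\<close>
lemma F_op_translate:
  assumes olN: "oriented_lagrangian scale \<omega> N oN" and f: "f \<in> heis_space \<omega> \<psi> L"
    and a: "a \<in> N" and b: "b \<in> L"
  shows "(\<Sum>x\<in>N. f (heis_mult \<omega> (a + b, 0) (heis_mult \<omega> (x, 0) h))) = \<psi> (\<omega> a b / 2) * F_op \<omega> N f h"
proof -
  have sN: "vs.subspace N" using ol_subspace[OF olN] .
  have "(\<Sum>x\<in>N. f (heis_mult \<omega> (a + b, 0) (heis_mult \<omega> (x, 0) h))) =
        (\<Sum>y\<in>N. f (heis_mult \<omega> (a + b, 0) (heis_mult \<omega> (y - a, 0) h)))"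
    by (rule sum.reindex_bij_witness[where i="\<lambda>y. y - a" and j="\<lambda>x. x + a"])
       (use sN a in \<open>auto intro: vs.subspace_add vs.subspace_diff\<close>)
  also have "\<dots> = (\<Sum>y\<in>N. \<psi> (\<omega> a b / 2) * f (heis_mult \<omega> (y, 0) h))"
  proof (rule sum.cong[OF refl])
    fix y assume "y \<in> N"
    show "f (heis_mult \<omega> (a + b, 0) (heis_mult \<omega> (y - a, 0) h)) = \<psi> (\<omega> a b / 2) * f (heis_mult \<omega> (y, 0) h)"
      unfolding heis_mult_split[OF olN a \<open>y \<in> N\<close>] using f b unfolding heis_space_def by blast
  qed
  finally show ?thesis unfolding F_op_def by (simp add: sum_distrib_left)
qed

lemma F_op_composition:
  assumes olN: "oriented_lagrangian scale \<omega> N oN" and olM: "oriented_lagrangian scale \<omega> M oM"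
    and olL: "oriented_lagrangian scale \<omega> L oL" and spl: "splitting N L oM \<alpha> \<beta>"
    and f: "f \<in> heis_space \<omega> \<psi> L"
  shows "F_op \<omega> N (F_op \<omega> M f) h =
    (\<Sum>c\<in>Kn n. \<psi> (quad_form (cross_form \<alpha> \<beta>) n c / 2)) * F_op \<omega> N f h"
proof -
  have lM: "length oM = n" using ol_length[OF olM] .
  have fiber: "(\<Sum>x\<in>N. f (heis_mult \<omega> (lin_comb oM c, 0) (heis_mult \<omega> (x, 0) h))) =
      \<psi> (quad_form (cross_form \<alpha> \<beta>) n c / 2) * F_op \<omega> N f h" for c
  proof -
    define a where "a = (\<Sum>i<n. scale (c i) (\<alpha> i))"
    define b where "b = (\<Sum>i<n. scale (c i) (\<beta> i))"
    have aN: "a \<in> N" unfolding a_def using ol_subspace[OF olN] spl lM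
      by (intro vs.subspace_sum vs.subspace_scale) (auto simp: splitting_def)
    have bL: "b \<in> L" unfolding b_def using ol_subspace[OF olL] spl lM
      by (intro vs.subspace_sum vs.subspace_scale) (auto simp: splitting_def)
    have "lin_comb oM c = (\<Sum>i<n. scale (c i) (\<alpha> i + \<beta> i))"
      unfolding lin_comb_def lM using spl lM by (intro sum.cong refl) (simp add: splitting_def)
    then have "lin_comb oM c = a + b"
      unfolding a_def b_def by (simp add: vs.scale_right_distrib sum.distrib)
    moreover have "\<omega> a b = (\<Sum>i<n. c i * (\<Sum>j<n. c j * \<omega> (\<alpha> i) (\<beta> j)))"
      unfolding a_def b_def by (simp only: omega_suml omega_scalel) (simp only: omega_sumr omega_scaler)
    then have "\<omega> a b = quad_form (cross_form \<alpha> \<beta>) n c"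
      unfolding quad_form_def cross_form_def by (simp add: sum_distrib_left mult_ac)
    ultimately show ?thesis using F_op_translate[OF olN f aN bL, of h] by simp
  qed
  have "F_op \<omega> N (F_op \<omega> M f) h = (\<Sum>m\<in>M. \<Sum>x\<in>N. f (heis_mult \<omega> (m, 0) (heis_mult \<omega> (x, 0) h)))"
    unfolding F_op_def by (rule sum.swap)
  also have "\<dots> = (\<Sum>c\<in>Kn n. \<Sum>x\<in>N. f (heis_mult \<omega> (lin_comb oM c, 0) (heis_mult \<omega> (x, 0) h)))"
    by (rule sum_ol_coordinates[OF olM])
  finally show ?thesis unfolding fiber by (simp add: sum_distrib_right)
qed

text \<open>The two sign factors (-1)^{n(n-1)/2} in A_{X,Y} cancel, leaving the Legendre symbol
  of the pairing determinant.\<close>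
lemma A_const_pairing:
  assumes "length oY = n"
  shows "A_const \<omega> \<psi> n oX oY = (gauss_G1 \<psi> / of_nat (card (UNIV::'k set))) ^ n *
           legendre_char (det_fun (pairing oY oX) n)"
proof -
  have "(-1::'k) ^ (n * (n - 1) div 2) * (-1) ^ (n * (n - 1) div 2) = 1"
    by (simp add: power_mult_distrib[symmetric])
  then show ?thesis unfolding A_const_def omega_wedge_def assms pairing_def
    by (simp add: mult.assoc[symmetric])
qed

lemma A_const_cocycle:
  assumes olN: "oriented_lagrangian scale \<omega> N oN" and olM: "oriented_lagrangian scale \<omega> M oM"
    and olL: "oriented_lagrangian scale \<omega> L oL" and spl: "splitting N L oM \<alpha> \<beta>"
    and gNM: "general_position N M" and gML: "general_position M L" and gNL: "general_position N L"
  shows "A_const \<omega> \<psi> n oN oM * A_const \<omega> \<psi> n oM oL *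
      (\<Sum>c\<in>Kn n. \<psi> (quad_form (cross_form \<alpha> \<beta>) n c / 2)) = A_const \<omega> \<psi> n oN oL"
proof -
  have lM: "length oM = n" and lL: "length oL = n" using ol_length olM olL by auto
  note rel = cross_form_det[OF olN olM olL spl]
  have nNM: "det_fun (pairing oM oN) n \<noteq> 0" by (rule pairing_det_nonzero[OF olN olM gNM])
  have nML: "det_fun (pairing oL oM) n \<noteq> 0" by (rule pairing_det_nonzero[OF olM olL gML])
  have nNL: "det_fun (pairing oL oN) n \<noteq> 0" by (rule pairing_det_nonzero[OF olN olL gNL])
  then have "det_fun (cross_form \<alpha> \<beta>) n \<noteq> 0" using rel nNM nML by auto
  then have "(\<Sum>c\<in>Kn n. \<psi> (quad_form (cross_form \<alpha> \<beta>) n c / 2)) =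
      gauss_G1 \<psi> ^ n * legendre_char (det_fun (cross_form \<alpha> \<beta>) n)"
    by (rule gauss_sum_quadratic_form[OF cross_form_symmetric[OF olN olM olL spl]])
  then show ?thesis unfolding A_const_pairing[OF lM] A_const_pairing[OF lL]
    using weil_constant_identity[OF rel nNL nNM nML] by simp
qed

theorem T_op_composition:
  assumes olN: "oriented_lagrangian scale \<omega> N oN" and olM: "oriented_lagrangian scale \<omega> M oM"
    and olL: "oriented_lagrangian scale \<omega> L oL"
    and gNM: "general_position N M" and gML: "general_position M L" and gNL: "general_position N L"
    and f: "f \<in> heis_space \<omega> \<psi> L"
  shows "T_op \<omega> \<psi> n N oN L oL f = T_op \<omega> \<psi> n N oN M oM (T_op \<omega> \<psi> n M oM L oL f)"
proof
  fix h
  obtain \<alpha> \<beta> where spl: "splitting N L oM \<alpha> \<beta>" using splitting_exists[OF gNL] .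
  have "T_op \<omega> \<psi> n N oN M oM (T_op \<omega> \<psi> n M oM L oL f) h =
      A_const \<omega> \<psi> n oN oM * A_const \<omega> \<psi> n oM oL * F_op \<omega> N (F_op \<omega> M f) h"
    unfolding T_op_def F_op_def by (simp add: sum_distrib_left mult.assoc)
  also have "\<dots> = A_const \<omega> \<psi> n oN oL * F_op \<omega> N f h"
    unfolding F_op_composition[OF olN olM olL spl f] A_const_cocycle[OF olN olM olL spl gNM gML gNL, symmetric]
    by (simp add: mult.assoc)
  finally show "T_op \<omega> \<psi> n N oN L oL f h = T_op \<omega> \<psi> n N oN M oM (T_op \<omega> \<psi> n M oM L oL f) h"
    unfolding T_op_def by simp
qed

end

theorem mainTheorem1:
  fixes scale :: "'k::{field,finite} \<Rightarrow> 'v::ab_group_add \<Rightarrow> 'v"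
    and \<omega> :: "'v \<Rightarrow> 'v \<Rightarrow> 'k"
    and \<psi> :: "'k \<Rightarrow> complex"
    and n :: nat
    and N M L :: "'v set"
    and oN oM oL :: "'v list"
    and f :: "'v \<times> 'k \<Rightarrow> complex"
  assumes char_odd: "(2::'k) \<noteq> 0"
    and vs: "vector_space scale"
    and fin: "finite (UNIV :: 'v set)"
    and dimV: "vector_space.dim scale (UNIV :: 'v set) = 2 * n"
    and sympl: "symplectic_form scale \<omega>"
    and psi_hom: "\<forall>a b. \<psi> (a + b) = \<psi> a * \<psi> b"
    and psi_nz: "\<forall>a. \<psi> a \<noteq> 0"
    and psi_nontriv: "\<exists>a. \<psi> a \<noteq> 1"
    and olN: "oriented_lagrangian scale \<omega> N oN"
    and olM: "oriented_lagrangian scale \<omega> M oM"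
    and olL: "oriented_lagrangian scale \<omega> L oL"
    and gNM: "general_position N M"
    and gML: "general_position M L"
    and gNL: "general_position N L"
    and f_in: "f \<in> heis_space \<omega> \<psi> L"
  shows "T_op \<omega> \<psi> n N oN L oL f = T_op \<omega> \<psi> n N oN M oM (T_op \<omega> \<psi> n M oM L oL f)"
proof -
  interpret heisenberg_setting \<psi> scale \<omega> n
  proof (intro heisenberg_setting.intro additive_character.intro symplectic_space.intro
      symplectic_space_axioms.intro vs)
  qed (use char_odd psi_hom psi_nz psi_nontriv dimV sympl in auto)
  show ?thesis by (rule T_op_composition[OF olN olM olL gNM gML gNL f_in])
qed

end
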